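(* Fix $x_0$, observations $(y_1,\dots,y_T)$, $\tau\in(0,1)$, $v\in B(0,\rho_{\max})$ and a nominal control $u\in U$ left continuous at $\tau$; let $x$ be the nominal trajectory and $x^\epsilon$ (with modes $x_i^\epsilon$) the trajectory under the perturbed control $u^\epsilon$, $\epsilon\in[0,\tau]$. Then for every $t\in[\tau,T]$ the state variation $$\Psi(t)=\frac{\partial_+}{\partial\epsilon}x^\epsilon(t)\Big|_{\epsilon=0}=\lim_{\epsilon\to0^+}\frac{x^\epsilon(t)-x(t)}{\epsilon}$$ exists, and $\Psi(t)=\Psi_1(t)$ for $t\in[\tau,1)$, $\Psi(t)=\Psi_i(t)$ for $t\in[i-1,i)$, $i\in\{2,\dots,T\}$, and $\Psi(T)=\frac{\partial}{\partial x}g(x_T(T),y_T)\Psi_T(T)$, where $\Psi_1$ is the unique solution on $[\tau,1]$ of $$\dot\Psi_1(t)=\frac{\partial}{\partial x}f(x_1(t),u(t))\Psi_1(t),\qquad \Psi_1(\tau)=f(x_1(\tau),v)-f(x_1(\tau),u(\tau)),$$ and for $i\ge2$, $\Psi_i$ is defined on $[i-1,i]$ by $$\Psi_i(i-1)=\frac{\partial}{\partial x}g(x_{i-1}(i-1),y_{i-1})\Psi_{i-1}(i-1),\qquad \dot\Psi_i(t)=\frac{\partial}{\partial x}f(x_i(t),u(t))\Psi_i(t).$$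
   Context: Fix positive integers $T,m,n_x,n_y$ and $\rho_{\max}\in(0,\infty)$; $B(0,\rho_{\max})$ is the closed Euclidean ball of radius $\rho_{\max}$ in $\mathbb{R}^m$; $U$ is the set of piecewise continuous $u:[0,T]\to\mathbb{R}^m$ with $\|u(t)\|_2\le\rho_{\max}$ for all $t$. $f:\mathbb{R}^{n_x}\times\mathbb{R}^m\to\mathbb{R}^{n_x}$ is continuously differentiable and there is $K_1\in[1,\infty)$ with $\|f(x',u')-f(x'',u'')\|_2\le K_1(\|x'-x''\|_2+\|u'-u''\|_2)$ for all $x',x''$ and $u',u''\in B(0,\rho_{\max})$. $g:\mathbb{R}^{n_x}\times\mathbb{R}^{n_y}\to\mathbb{R}^{n_x}$ is continuous and differentiable in its first argument, and there are $K_2,\dots,K_5\ge0$ and positive integers $L_1,L_2$ such that for all $x,y$ both $\|g(x,y)\|_2$ and $\|\frac{\partial}{\partial x}g(x,y)\|_2$ are at most $K_2+K_3\|x\|_2^{L_1}+K_4\|y\|_2^{L_2}+K_5\|x\|_2^{L_1}\|y\|_2^{L_2}$. For a control $w\in U$ the hybrid trajectory from $x_0$ is: $x_1$ on $[0,1]$ solves $\dot x_1=f(x_1,w)$, $x_1(0)=x_0$; for $i=2,\dots,T$, $x_i$ on $[i-1,i]$ solves $\dot x_i=f(x_i,w)$ with $x_i(i-1)=g(x_{i-1}(i-1),y_{i-1})$; $x(t)=x_i(t)$ for $t\in[i-1,i)$, and $x(T)=g(x_T(T),y_T)$. Perturbed control: for $\epsilon\in[0,\tau]$, $u^\epsilon(t)=v$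 if $t\in(\tau-\epsilon,\tau]$ and $u^\epsilon(t)=u(t)$ otherwise; $x^\epsilon$ is the trajectory under $u^\epsilon$ and $x=x^0$. *)

theory Defs
  imports "HOL-Analysis.Analysis"
begin

definition piecewise_continuous_on :: "real \<Rightarrow> real \<Rightarrow> (real \<Rightarrow> 'a::real_normed_vector) \<Rightarrow> bool" where
  "piecewise_continuous_on a b w \<longleftrightarrow>
     (\<exists>D. finite D \<and> D \<subseteq> {a..b} \<and> continuous_on ({a..b} - D) w \<and>
        (\<forall>d\<in>D. (a < d \<longrightarrow> (\<exists>l. (w \<longlongrightarrow> l) (at_left d))) \<and>
                (d < b \<longrightarrow> (\<exists>l. (w \<longlongrightarrow> l) (at_right d)))))"

definition admissible :: "nat \<Rightarrow> real \<Rightarrow> (real \<Rightarrow> 'a::real_normed_vector) \<Rightarrow> bool" where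
  "admissible T \<rho> w \<longleftrightarrow> piecewise_continuous_on 0 (real T) w \<and> (\<forall>t\<in>{0..real T}. norm (w t) \<le> \<rho>)"

definition pert :: "(real \<Rightarrow> 'a) \<Rightarrow> 'a \<Rightarrow> real \<Rightarrow> real \<Rightarrow> real \<Rightarrow> 'a" where
  "pert w v \<tau> \<epsilon> t = (if t \<in> {\<tau> - \<epsilon><..\<tau>} then v else w t)"

text \<open>xs i is the i-th mode x_i on [i-1,i]; (Caratheodory) solution in integral form.\<close>
definition is_hybrid_traj ::
  "('x::euclidean_space \<times> 'u::euclidean_space \<Rightarrow> 'x) \<Rightarrow> ('x \<Rightarrow> 'y \<Rightarrow> 'x) \<Rightarrow> nat \<Rightarrow> 'x \<Rightarrow>
   (nat \<Rightarrow> 'y) \<Rightarrow> (real \<Rightarrow> 'u) \<Rightarrow> (nat \<Rightarrow> real \<Rightarrow> 'x) \<Rightarrow> bool" where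
  "is_hybrid_traj f g T x0 y w xs \<longleftrightarrow>
     xs 1 0 = x0 \<and>
     (\<forall>i\<in>{2..T}. xs i (real i - 1) = g (xs (i - 1) (real i - 1)) (y (i - 1))) \<and>
     (\<forall>i\<in>{1..T}. continuous_on {real i - 1..real i} (xs i) \<and>
        (\<forall>t\<in>{real i - 1..real i}.
           ((\<lambda>s. f (xs i s, w s)) has_integral (xs i t - xs i (real i - 1))) {real i - 1..t}))"

text \<open>The full state x(t): x_i(t) on [i-1,i), and x(T) = g(x_T(T), y_T).\<close>
definition hybrid_state :: "('x \<Rightarrow> 'y \<Rightarrow> 'x) \<Rightarrow> nat \<Rightarrow> (nat \<Rightarrow> 'y) \<Rightarrow> (nat \<Rightarrow> real \<Rightarrow> 'x) \<Rightarrow> real \<Rightarrow> 'x" where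
  "hybrid_state g T y xs t =
     (if t = real T then g (xs T (real T)) (y T) else xs (nat \<lfloor>t\<rfloor> + 1) t)"

definition partial_x :: "(('x::real_normed_vector \<times> 'u::real_normed_vector) \<Rightarrow>\<^sub>L 'z::real_normed_vector) \<Rightarrow> 'x \<Rightarrow> 'z" where
  "partial_x D h = blinfun_apply D (h, 0)"

end

theory Submission
  imports Defs
begin

(* Before the needle the perturbed and nominal trajectories coincide; on the needle
   (tau - eps, tau] they drift apart only by O(eps) (Gronwall), so integrating
   f(x^eps, v) - f(x, u) over it gives x^eps(tau) - x(tau) = eps (f(x(tau), v) - f(x(tau), u(tau))) + o(eps),
   by continuity of x and left continuity of u at tau.  After the needle both trajectories follow
   the same dynamics, and Gronwall's inequality for the error (x^eps - x)/eps - Psi of the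
   linearised equation, in which f' is uniformly continuous near the nominal trajectory,
   propagates this first-order expansion through each mode.  At the switching times it passes
   through the reset map g by the chain rule for one-sided difference quotients. *)

section \<open>Integral solutions and Gronwall's inequality\<close>

definition integral_solution ::
  "(real \<Rightarrow> 'a \<Rightarrow> 'a::real_normed_vector) \<Rightarrow> real \<Rightarrow> real \<Rightarrow> (real \<Rightarrow> 'a) \<Rightarrow> bool" where
  "integral_solution F a b X \<longleftrightarrow> continuous_on {a..b} X \<and>
     (\<forall>t\<in>{a..b}. ((\<lambda>s. F s (X s)) has_integral (X t - X a)) {a..t})"

lemma integral_solution_subinterval:
  fixes X :: "real \<Rightarrow> 'a::banach"
  assumes X: "integral_solution F a b X" and "a \<le> c" "d \<le> b"
  shows "integral_solution F c d X"
proof -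
  have "((\<lambda>s. F s (X s)) has_integral (X t - X c)) {c..t}" if t: "t \<in> {c..d}" for t
  proof -
    have Xt: "((\<lambda>s. F s (X s)) has_integral (X t - X a)) {a..t}"
      and Xc: "((\<lambda>s. F s (X s)) has_integral (X c - X a)) {a..c}"
      using X t assms(2,3) unfolding integral_solution_def by auto
    have "(\<lambda>s. F s (X s)) integrable_on {c..t}"
      using integrable_subinterval_real[OF has_integral_integrable[OF Xt]] assms(2) by simp
    then obtain j where j: "((\<lambda>s. F s (X s)) has_integral j) {c..t}" by blast
    have "((\<lambda>s. F s (X s)) has_integral (X c - X a + j)) {a..t}"
      by (rule has_integral_combine[OF _ _ Xc j]) (use t assms(2) in auto)
    then have "X c - X a + j = X t - X a" using Xt by (rule has_integral_unique)
    then have "j = X t - X c" by (simp add: algebra_simps)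
    with j show ?thesis by simp
  qed
  moreover have "continuous_on {c..d} X"
    using X assms(2,3) unfolding integral_solution_def by (auto intro: continuous_on_subset)
  ultimately show ?thesis unfolding integral_solution_def by blast
qed

lemma integral_solution_spike:
  assumes X: "integral_solution F a b X" and "finite S"
    and FG: "\<And>s. s \<in> {a..b} - S \<Longrightarrow> F s (X s) = G s (X s)"
  shows "integral_solution G a b X"
  unfolding integral_solution_def
proof (intro conjI ballI)
  show "continuous_on {a..b} X" using X unfolding integral_solution_def by blast
  fix t assume t: "t \<in> {a..b}"
  have "((\<lambda>s. F s (X s)) has_integral (X t - X a)) {a..t}"
    using X t unfolding integral_solution_def by blast
  then show "((\<lambda>s. G s (X s)) has_integral (X t - X a)) {a..t}"
  proof (rule has_integral_spike_finite[OF \<open>finite S\<close>, rotated])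
    fix s assume "s \<in> {a..t} - S"
    then have "s \<in> {a..b} - S" using t by auto
    from FG[OF this] show "G s (X s) = F s (X s)" by simp
  qed
qed

lemma integral_solution_diff:
  assumes X: "integral_solution F a b X" and Y: "integral_solution G a b Y"
  shows "integral_solution (\<lambda>s _. F s (X s) - G s (Y s)) a b (\<lambda>s. X s - Y s)"
  unfolding integral_solution_def
proof (intro conjI ballI)
  show "continuous_on {a..b} (\<lambda>s. X s - Y s)"
    using assms unfolding integral_solution_def by (intro continuous_intros) auto
  fix t assume "t \<in> {a..b}"
  then have "((\<lambda>s. F s (X s) - G s (Y s)) has_integral (X t - X a) - (Y t - Y a)) {a..t}"
    using assms unfolding integral_solution_def by (intro has_integral_diff) auto
  then show "((\<lambda>s. F s (X s) - G s (Y s)) has_integral (X t - Y t - (X a - Y a))) {a..t}"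
    by (simp add: algebra_simps)
qed

lemma integral_solution_scaleR:
  assumes "integral_solution F a b X"
  shows "integral_solution (\<lambda>s _. c *\<^sub>R F s (X s)) a b (\<lambda>s. c *\<^sub>R X s)"
  unfolding integral_solution_def
proof (intro conjI ballI)
  show "continuous_on {a..b} (\<lambda>s. c *\<^sub>R X s)"
    using assms unfolding integral_solution_def by (intro continuous_intros) auto
  fix t assume "t \<in> {a..b}"
  then have "((\<lambda>s. c *\<^sub>R F s (X s)) has_integral c *\<^sub>R (X t - X a)) {a..t}"
    using assms unfolding integral_solution_def by (intro has_integral_cmul) auto
  then show "((\<lambda>s. c *\<^sub>R F s (X s)) has_integral (c *\<^sub>R X t - c *\<^sub>R X a)) {a..t}"
    by (simp add: scaleR_diff_right)
qed

lemma gronwall_inequality: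
  fixes \<phi> :: "real \<Rightarrow> real"
  assumes cont: "continuous_on {a..b} \<phi>" and K: "K \<ge> 0"
    and le: "\<And>t. t \<in> {a..b} \<Longrightarrow> \<phi> t \<le> C + K * integral {a..t} \<phi>"
    and t: "t \<in> {a..b}"
  shows "\<phi> t \<le> C * exp (K * (t - a))"
proof -
  define I where "I = (\<lambda>t. integral {a..t} \<phi>)"
  define H where "H = (\<lambda>t. exp (- K * (t - a)) * (C + K * I t))"
  have dI: "(I has_real_derivative \<phi> s) (at s within {a..b})" if "s \<in> {a..b}" for s
    using integral_has_vector_derivative[OF cont that] unfolding I_def
    by (simp add: has_real_derivative_iff_has_vector_derivative)
  have dH: "(H has_real_derivative (exp (- K * (s - a)) * (K * (\<phi> s - (C + K * I s)))))
      (at s within {a..b})" if "s \<in> {a..b}" for s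
    unfolding H_def
    by (rule derivative_eq_intros dI[OF that] | simp)+ (simp add: algebra_simps)
  have "H t \<le> H a"
  proof (rule DERIV_nonpos_imp_decreasing_open[of a t])
    show "a \<le> t" using t by auto
    show "continuous_on {a..t} H"
    proof (rule continuous_on_subset)
      show "continuous_on {a..b} H"
        using dH by (meson DERIV_continuous continuous_at_imp_continuous_on
            continuous_on_eq_continuous_within)
    qed (use t in auto)
    fix x assume x: "a < x" "x < t"
    then have xab: "x \<in> {a..b}" using t by auto
    have "at x within {a..b} = at x" using x t by (intro at_within_Icc_at) auto
    then have "(H has_real_derivative (exp (- K * (x - a)) * (K * (\<phi> x - (C + K * I x))))) (at x)"
      using dH[OF xab] by simp
    moreover have "exp (- K * (x - a)) * (K * (\<phi> x - (C + K * I x))) \<le> 0"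
      using le[OF xab] K unfolding I_def by (intro mult_nonneg_nonpos) auto
    ultimately show "\<exists>y. (H has_real_derivative y) (at x) \<and> y \<le> 0" by blast
  qed
  also have "H a = C" unfolding H_def I_def by simp
  finally have "exp (- K * (t - a)) * (C + K * I t) \<le> C" unfolding H_def .
  then have "exp (K * (t - a)) * (exp (- K * (t - a)) * (C + K * I t)) \<le> exp (K * (t - a)) * C"
    by (intro mult_left_mono) auto
  also have "exp (K * (t - a)) * (exp (- K * (t - a)) * (C + K * I t)) = C + K * I t"
    by (simp add: exp_minus[symmetric] mult.assoc[symmetric] exp_add[symmetric])
  finally have "C + K * I t \<le> C * exp (K * (t - a))" by (simp add: mult.commute)
  then show ?thesis using le[OF t] unfolding I_def by simp
qed

lemma integral_solution_norm_bound:
  fixes D :: "real \<Rightarrow> 'a::euclidean_space"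
  assumes D: "integral_solution (\<lambda>s _. F s) a b D" and K: "K \<ge> 0" and c: "c \<ge> 0"
    and F: "\<And>s. s \<in> {a..b} \<Longrightarrow> norm (F s) \<le> K * norm (D s) + c"
    and t: "t \<in> {a..b}"
  shows "norm (D t) \<le> (norm (D a) + c * (b - a)) * exp (K * (t - a))"
proof (rule gronwall_inequality[OF _ K _ t])
  have Dc: "continuous_on {a..b} D" using D unfolding integral_solution_def by blast
  then show phic: "continuous_on {a..b} (\<lambda>s. norm (D s))" by (intro continuous_intros)
  fix s assume s: "s \<in> {a..b}"
  have sub: "{a..s} \<subseteq> {a..b}" using s by auto
  have DF: "(F has_integral (D s - D a)) {a..s}" using D s unfolding integral_solution_def by auto
  have int: "(\<lambda>r. norm (D r)) integrable_on {a..s}"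
    by (rule integrable_continuous_interval, rule continuous_on_subset[OF phic sub])
  have int_affine: "(\<lambda>r. K * norm (D r) + c) integrable_on {a..s}"
    by (rule integrable_continuous_interval, rule continuous_on_subset[OF _ sub])
      (use Dc in \<open>intro continuous_intros\<close>)
  have "norm (D s - D a) = norm (integral {a..s} F)"
    using DF by (simp add: has_integral_integrable_integral)
  also have "\<dots> \<le> integral {a..s} (\<lambda>r. K * norm (D r) + c)"
    using DF int_affine F sub by (intro integral_norm_bound_integral) auto
  also have "\<dots> = integral {a..s} (\<lambda>r. K * norm (D r)) + integral {a..s} (\<lambda>r. c)"
    using int by (intro integral_add integrable_on_mult_right) auto
  also have "\<dots> = K * integral {a..s} (\<lambda>r. norm (D r)) + c * (s - a)"
    using s by simp
  also have "\<dots> \<le> K * integral {a..s} (\<lambda>r. norm (D r)) + c * (b - a)"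
    using c s by (intro add_left_mono mult_left_mono) auto
  finally show "norm (D s) \<le> norm (D a) + c * (b - a) + K * integral {a..s} (\<lambda>s. norm (D s))"
    using norm_triangle_sub[of "D s" "D a"] by simp
qed

section \<open>Difference quotients and linearisation\<close>

lemma tendsto_by_eventual_bound:
  fixes z :: "'a \<Rightarrow> 'b::real_normed_vector"
  assumes r: "(r \<longlongrightarrow> 0) F"
    and bound: "\<And>\<eta>. \<eta> > 0 \<Longrightarrow> \<forall>\<^sub>F x in F. norm (z x - L) \<le> r x + C * \<eta>"
  shows "(z \<longlongrightarrow> L) F"
proof (rule tendstoI)
  fix e :: real assume e: "e > 0"
  define \<eta> where "\<eta> = e / (2 * (\<bar>C\<bar> + 1))"
  have \<eta>: "\<eta> > 0" using e unfolding \<eta>_def by (simp add: add_pos_nonneg)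
  have "C * \<eta> \<le> \<bar>C\<bar> * \<eta>" using \<eta> by (intro mult_right_mono) auto
  also have "\<dots> < (\<bar>C\<bar> + 1) * \<eta>" using \<eta> by simp
  also have "\<dots> = e / 2" using abs_ge_zero[of C] unfolding \<eta>_def by (simp add: field_simps)
  finally have C\<eta>: "C * \<eta> < e / 2" .
  have "\<forall>\<^sub>F x in F. r x < e / 2" using order_tendstoD(2)[OF r, of "e / 2"] e by simp
  with bound[OF \<eta>] show "\<forall>\<^sub>F x in F. dist (z x) L < e"
    by eventually_elim (use C\<eta> in \<open>simp add: dist_norm\<close>)
qed

lemma tendsto_diff_quotient_compose:
  fixes g :: "'a::real_normed_vector \<Rightarrow> 'b::real_normed_vector"
  assumes g: "(g has_derivative G) (at X)"
    and lim: "((\<lambda>\<epsilon>. (XE \<epsilon> - X) /\<^sub>R \<epsilon>) \<longlongrightarrow> P) (at_right 0)"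
  shows "((\<lambda>\<epsilon>. (g (XE \<epsilon>) - g X) /\<^sub>R \<epsilon>) \<longlongrightarrow> G P) (at_right 0)"
proof -
  have G: "bounded_linear G" using g by (simp add: has_derivative_at_alt)
  define q where "q \<epsilon> = (XE \<epsilon> - X) /\<^sub>R \<epsilon>" for \<epsilon>
  have "((\<lambda>\<epsilon>. (g (XE \<epsilon>) - g X) /\<^sub>R \<epsilon> - G (q \<epsilon>)) \<longlongrightarrow> 0) (at_right 0)"
  proof (rule tendstoI)
    fix e :: real assume e: "e > 0"
    define B where "B = norm P + 1"
    have B: "B > 0" unfolding B_def by (simp add: add_nonneg_pos)
    obtain d where d: "d > 0" and lin: "\<And>y. norm (y - X) < d \<Longrightarrow>
        norm (g y - g X - G (y - X)) \<le> e / B * norm (y - X)"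
      using g e B unfolding has_derivative_at_alt by (meson divide_pos_pos)
    have "\<forall>\<^sub>F \<epsilon> in at_right 0. norm (q \<epsilon>) < B"
      using order_tendstoD(2)[OF tendsto_norm[OF lim]] unfolding q_def B_def by simp
    moreover have "\<forall>\<^sub>F \<epsilon> in at_right 0. \<epsilon> < d / B"
      using d B by (intro order_tendstoD(2)[OF tendsto_ident_at]) simp
    ultimately show "\<forall>\<^sub>F \<epsilon> in at_right 0. dist ((g (XE \<epsilon>) - g X) /\<^sub>R \<epsilon> - G (q \<epsilon>)) 0 < e"
      using eventually_at_right_less
    proof eventually_elim
      case (elim \<epsilon>)
      have XE: "XE \<epsilon> - X = \<epsilon> *\<^sub>R q \<epsilon>" unfolding q_def using elim by simp
      have "norm (XE \<epsilon> - X) < \<epsilon> * B" using elim XE by simp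
      also have "\<dots> < d" using elim B by (simp add: field_simps)
      finally have "norm (g (XE \<epsilon>) - g X - G (XE \<epsilon> - X)) \<le> e / B * norm (XE \<epsilon> - X)"
        by (rule lin)
      moreover have "G (XE \<epsilon> - X) = \<epsilon> *\<^sub>R G (q \<epsilon>)"
        unfolding XE by (rule linear.scaleR[OF bounded_linear.linear[OF G]])
      ultimately have "norm (g (XE \<epsilon>) - g X - \<epsilon> *\<^sub>R G (q \<epsilon>)) \<le> e / B * (\<epsilon> * norm (q \<epsilon>))"
        using XE elim by simp
      also have "\<dots> < e * \<epsilon>" using elim e B by (simp add: field_simps)
      finally have "norm (g (XE \<epsilon>) - g X - \<epsilon> *\<^sub>R G (q \<epsilon>)) / \<epsilon> < e"
        using elim by (simp add: divide_less_eq)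
      moreover have "(g (XE \<epsilon>) - g X) /\<^sub>R \<epsilon> - G (q \<epsilon>) = (g (XE \<epsilon>) - g X - \<epsilon> *\<^sub>R G (q \<epsilon>)) /\<^sub>R \<epsilon>"
        using elim by (simp add: algebra_simps)
      ultimately show ?case using elim by (simp add: dist_norm divide_inverse_commute)
    qed
  qed
  moreover have "((\<lambda>\<epsilon>. G (q \<epsilon>)) \<longlongrightarrow> G P) (at_right 0)"
    using bounded_linear.tendsto[OF G lim] unfolding q_def .
  ultimately show ?thesis by (rule Lim_transform[rotated])
qed

lemma uniform_linearization:
  fixes f :: "'a::euclidean_space \<Rightarrow> 'b::real_normed_vector" and f' :: "'a \<Rightarrow> 'a \<Rightarrow>\<^sub>L 'b"
    and C :: "'a set"
  assumes f_deriv: "\<And>p. (f has_derivative blinfun_apply (f' p)) (at p)"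
    and f'_cont: "continuous_on UNIV f'"
    and C: "compact C" and \<eta>: "\<eta> > 0"
  obtains \<delta> where "\<delta> > 0"
    "\<And>p h. p \<in> C \<Longrightarrow> norm h < \<delta> \<Longrightarrow> norm (f (p + h) - f p - blinfun_apply (f' p) h) \<le> \<eta> * norm h"
proof -
  obtain R where R: "\<And>p. p \<in> C \<Longrightarrow> norm p \<le> R"
    using compact_imp_bounded[OF C] unfolding bounded_iff by blast
  define S where "S = cball (0::'a) (R + 1)"
  have "uniformly_continuous_on S f'"
    unfolding S_def by (rule compact_uniformly_continuous[OF continuous_on_subset[OF f'_cont]]) auto
  then obtain \<delta> where \<delta>: "\<delta> > 0"
    and uc: "\<And>p q. p \<in> S \<Longrightarrow> q \<in> S \<Longrightarrow> dist q p < \<delta> \<Longrightarrow> dist (f' q) (f' p) < \<eta>"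
    using \<eta> unfolding uniformly_continuous_on_def by metis
  show ?thesis
  proof (rule that[of "min 1 \<delta>"])
    fix p and h :: 'a assume p: "p \<in> C" and h: "norm h < min 1 \<delta>"
    have ball_S: "ball p (min 1 \<delta>) \<subseteq> S"
    proof
      fix x assume "x \<in> ball p (min 1 \<delta>)"
      then have "norm (x - p) < 1" by (simp add: dist_norm norm_minus_commute)
      then show "x \<in> S" using R[OF p] norm_triangle_sub[of x p] unfolding S_def by simp
    qed
    have "norm (f (p + h) - f p - blinfun_apply (f' p) (p + h - p)) \<le> norm (p + h - p) * \<eta>"
    proof (rule differentiable_bound_linearization[where S = "ball p (min 1 \<delta>)"])
      fix c :: real assume "c \<in> {0..1}"
      then have "norm (c *\<^sub>R h) \<le> norm h" by (simp add: mult_left_le_one_le)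
      then show "p + c *\<^sub>R (p + h - p) \<in> ball p (min 1 \<delta>)" using h by (simp add: dist_norm)
    next
      fix x assume x: "x \<in> ball p (min 1 \<delta>)"
      show "(f has_derivative blinfun_apply (f' x)) (at x within ball p (min 1 \<delta>))"
        by (rule has_derivative_at_withinI[OF f_deriv])
      have "p \<in> S" "x \<in> S" using ball_S x \<delta> by auto
      moreover have "dist x p < \<delta>" using x by (simp add: dist_commute)
      ultimately have "dist (f' x) (f' p) < \<eta>" by (rule uc)
      then show "onorm (blinfun_apply (f' x) - blinfun_apply (f' p)) \<le> \<eta>"
        by (simp add: dist_norm norm_blinfun.rep_eq minus_blinfun.rep_eq fun_diff_def)
    qed (use \<delta> in simp)
    then show "norm (f (p + h) - f p - blinfun_apply (f' p) h) \<le> \<eta> * norm h"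
      by (simp add: mult.commute)
  qed (use \<delta> in simp)
qed

lemma bounded_graph_in_compact:
  fixes X :: "real \<Rightarrow> 'a::euclidean_space" and w :: "real \<Rightarrow> 'b::euclidean_space"
  assumes X: "continuous_on {a..b} X" and w: "\<And>s. s \<in> {a..b} \<Longrightarrow> norm (w s) \<le> \<rho>"
  obtains C where "compact C" "\<And>s. s \<in> {a..b} \<Longrightarrow> (X s, w s) \<in> C"
proof -
  have "bounded (X ` {a..b})"
    using X by (intro compact_imp_bounded compact_continuous_image) auto
  then obtain R where R: "\<And>s. s \<in> {a..b} \<Longrightarrow> norm (X s) \<le> R"
    unfolding bounded_iff by blast
  show ?thesis
  proof (rule that[of "cball 0 (R + \<rho>)"])
    fix s assume "s \<in> {a..b}"
    then show "(X s, w s) \<in> cball 0 (R + \<rho>)"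
      using R[of s] w[of s] norm_Pair_le[of "X s" "w s"] by simp
  qed simp
qed

lemma uniform_partial_linearization:
  fixes f :: "'x::euclidean_space \<times> 'u::euclidean_space \<Rightarrow> 'z::real_normed_vector"
  assumes f_deriv: "\<And>p. (f has_derivative blinfun_apply (f' p)) (at p)"
    and f'_cont: "continuous_on UNIV f'"
    and C: "compact C" and \<eta>: "\<eta> > 0"
  obtains \<delta> where "\<delta> > 0" "\<And>x u h. (x, u) \<in> C \<Longrightarrow> norm h < \<delta> \<Longrightarrow>
    norm (f (x + h, u) - f (x, u) - partial_x (f' (x, u)) h) \<le> \<eta> * norm h"
proof -
  obtain \<delta> where \<delta>: "\<delta> > 0" and lin: "\<And>p k. p \<in> C \<Longrightarrow> norm k < \<delta> \<Longrightarrow>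
      norm (f (p + k) - f p - blinfun_apply (f' p) k) \<le> \<eta> * norm k"
    using uniform_linearization[OF f_deriv f'_cont C \<eta>] by blast
  show ?thesis
  proof (rule that[OF \<delta>])
    fix x u and h :: 'x assume "(x, u) \<in> C" "norm h < \<delta>"
    then show "norm (f (x + h, u) - f (x, u) - partial_x (f' (x, u)) h) \<le> \<eta> * norm h"
      using lin[of "(x, u)" "(h, 0)"] by (simp add: partial_x_def norm_Pair)
  qed
qed

lemma partial_x_diff: "partial_x D (h1 - h2) = partial_x D h1 - partial_x D h2"
  unfolding partial_x_def by (simp flip: blinfun.diff_right)

lemma partial_x_scaleR: "partial_x D (c *\<^sub>R h) = c *\<^sub>R partial_x D h"
  unfolding partial_x_def by (simp flip: blinfun.scaleR_right)

lemma norm_partial_x: "norm (partial_x D h) \<le> norm D * norm h"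
  unfolding partial_x_def using norm_blinfun[of D "(h, 0)"] by (simp add: norm_Pair)

lemma variational_error_bound:
  fixes f :: "'x::euclidean_space \<times> 'u::real_normed_vector \<Rightarrow> 'x"
  assumes X: "integral_solution (\<lambda>s x. f (x, w s)) a b X"
    and Y: "integral_solution (\<lambda>s x. f (x, w s)) a b Y"
    and P: "integral_solution (\<lambda>s p. partial_x (f' (X s, w s)) p) a b P"
    and \<epsilon>: "\<epsilon> > 0" and r: "r \<ge> 0" and A: "A \<ge> 0"
    and f'_bound: "\<And>s. s \<in> {a..b} \<Longrightarrow> norm (f' (X s, w s)) \<le> A"
    and remainder: "\<And>s. s \<in> {a..b} \<Longrightarrow>
      norm (f (Y s, w s) - f (X s, w s) - partial_x (f' (X s, w s)) (Y s - X s)) \<le> r * \<epsilon>"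
    and t: "t \<in> {a..b}"
  shows "norm ((Y t - X t) /\<^sub>R \<epsilon> - P t)
    \<le> (norm ((Y a - X a) /\<^sub>R \<epsilon> - P a) + r * (b - a)) * exp (A * (t - a))"
proof (rule integral_solution_norm_bound[OF _ A r _ t])
  show "integral_solution (\<lambda>s _. (f (Y s, w s) - f (X s, w s)) /\<^sub>R \<epsilon> - partial_x (f' (X s, w s)) (P s))
      a b (\<lambda>s. (Y s - X s) /\<^sub>R \<epsilon> - P s)"
    using integral_solution_diff[OF integral_solution_scaleR[OF integral_solution_diff[OF Y X]] P] .
  fix s assume s: "s \<in> {a..b}"
  define L where "L = partial_x (f' (X s, w s))"
  define R where "R = f (Y s, w s) - f (X s, w s) - L (Y s - X s)"
  have "(f (Y s, w s) - f (X s, w s)) /\<^sub>R \<epsilon> - L (P s) = L ((Y s - X s) /\<^sub>R \<epsilon> - P s) + R /\<^sub>R \<epsilon>"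
    unfolding R_def L_def partial_x_diff partial_x_scaleR by (simp add: algebra_simps)
  moreover have "norm (L ((Y s - X s) /\<^sub>R \<epsilon> - P s)) \<le> A * norm ((Y s - X s) /\<^sub>R \<epsilon> - P s)"
    unfolding L_def by (rule order_trans[OF norm_partial_x mult_right_mono[OF f'_bound[OF s]]]) simp
  moreover have "norm (R /\<^sub>R \<epsilon>) \<le> r"
    using remainder[OF s] \<epsilon> unfolding R_def L_def by (simp add: inverse_eq_divide divide_le_eq mult.commute)
  ultimately show "norm ((f (Y s, w s) - f (X s, w s)) /\<^sub>R \<epsilon> - partial_x (f' (X s, w s)) (P s))
      \<le> A * norm ((Y s - X s) /\<^sub>R \<epsilon> - P s) + r"
    unfolding L_def by (smt (verit) norm_triangle_ineq)
qed

section \<open>Needle variations of Lipschitz control systems\<close>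

locale lipschitz_control_system =
  fixes f :: "'x::euclidean_space \<times> 'u::real_normed_vector \<Rightarrow> 'x" and \<rho> K :: real
  assumes K_nonneg: "K \<ge> 0"
    and lipschitz: "\<And>x1 x2 u1 u2. norm u1 \<le> \<rho> \<Longrightarrow> norm u2 \<le> \<rho> \<Longrightarrow>
      norm (f (x1, u1) - f (x2, u2)) \<le> K * (norm (x1 - x2) + norm (u1 - u2))"
begin

abbreviation trajectory :: "(real \<Rightarrow> 'u) \<Rightarrow> real \<Rightarrow> real \<Rightarrow> (real \<Rightarrow> 'x) \<Rightarrow> bool" where
  "trajectory w \<equiv> integral_solution (\<lambda>s x. f (x, w s))"

lemma trajectory_deviation:
  assumes X1: "trajectory w1 a b X1" and X2: "trajectory w2 a b X2"
    and w: "\<And>s. s \<in> {a..b} \<Longrightarrow> norm (w1 s) \<le> \<rho> \<and> norm (w2 s) \<le> \<rho> \<and> norm (w1 s - w2 s) \<le> c"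
    and t: "t \<in> {a..b}"
  shows "norm (X1 t - X2 t) \<le> (norm (X1 a - X2 a) + K * c * (b - a)) * exp (K * (t - a))"
proof (rule integral_solution_norm_bound[OF integral_solution_diff[OF X1 X2] K_nonneg _ _ t])
  have "c \<ge> 0" using w[OF t] norm_ge_zero order_trans by blast
  then show "K * c \<ge> 0" using K_nonneg by simp
  fix s assume s: "s \<in> {a..b}"
  have "norm (f (X1 s, w1 s) - f (X2 s, w2 s)) \<le> K * (norm (X1 s - X2 s) + norm (w1 s - w2 s))"
    using w[OF s] by (intro lipschitz) auto
  also have "\<dots> \<le> K * norm (X1 s - X2 s) + K * c"
    using w[OF s] K_nonneg by (simp add: distrib_left mult_left_mono)
  finally show "norm (f (X1 s, w1 s) - f (X2 s, w2 s)) \<le> K * norm (X1 s - X2 s) + K * c" .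
qed

lemma trajectory_deviation_linear:
  assumes w: "\<And>s. s \<in> {a..b} \<Longrightarrow> norm (w s) \<le> \<rho>"
    and X: "trajectory w a b X" and XE: "\<forall>\<^sub>F \<epsilon> in at_right 0. trajectory w a b (XE \<epsilon>)"
    and init: "((\<lambda>\<epsilon>. (XE \<epsilon> a - X a) /\<^sub>R \<epsilon>) \<longlongrightarrow> P) (at_right 0)"
  obtains B where "B > 0" "\<forall>\<^sub>F \<epsilon> in at_right 0. \<forall>s\<in>{a..b}. norm (XE \<epsilon> s - X s) \<le> B * \<epsilon>"
proof -
  define B0 where "B0 = norm P + 1"
  have B: "B0 * exp (K * (b - a)) > 0" unfolding B0_def by (simp add: add_nonneg_pos)
  have "\<forall>\<^sub>F \<epsilon> in at_right 0. norm ((XE \<epsilon> a - X a) /\<^sub>R \<epsilon>) < B0"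
    using order_tendstoD(2)[OF tendsto_norm[OF init], of B0] unfolding B0_def by simp
  with XE eventually_at_right_less[of "0::real"]
  have "\<forall>\<^sub>F \<epsilon> in at_right 0. \<forall>s\<in>{a..b}. norm (XE \<epsilon> s - X s) \<le> B0 * exp (K * (b - a)) * \<epsilon>"
  proof eventually_elim
    case (elim \<epsilon>)
    show ?case
    proof
      fix s assume s: "s \<in> {a..b}"
      have "norm (XE \<epsilon> s - X s) \<le> (norm (XE \<epsilon> a - X a) + K * 0 * (b - a)) * exp (K * (s - a))"
        using elim(1) X w s by (intro trajectory_deviation) auto
      also have "\<dots> \<le> (B0 * \<epsilon>) * exp (K * (b - a))"
      proof (rule mult_mono)
        have "norm (XE \<epsilon> a - X a) = \<epsilon> * norm ((XE \<epsilon> a - X a) /\<^sub>R \<epsilon>)" using elim by simp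
        also have "\<dots> \<le> \<epsilon> * B0" using elim by (intro mult_left_mono) auto
        finally show "norm (XE \<epsilon> a - X a) + K * 0 * (b - a) \<le> B0 * \<epsilon>" by (simp add: mult.commute)
        show "exp (K * (s - a)) \<le> exp (K * (b - a))" using s K_nonneg by (simp add: mult_left_mono)
      qed (use elim B0_def in \<open>auto simp: add_nonneg_pos\<close>)
      finally show "norm (XE \<epsilon> s - X s) \<le> B0 * exp (K * (b - a)) * \<epsilon>" by (simp add: algebra_simps)
    qed
  qed
  with B show ?thesis by (rule that)
qed

lemma trajectory_pert_after:
  assumes Y: "trajectory (pert w v \<tau> \<epsilon>) c d Y" and "\<tau> \<le> c"
  shows "trajectory w c d Y"
  by (rule integral_solution_spike[OF Y, of "{\<tau>}"]) (use \<open>\<tau> \<le> c\<close> in \<open>auto simp: pert_def\<close>)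

lemma needle_agrees_before:
  assumes \<epsilon>: "\<epsilon> \<ge> 0" and w: "\<And>s. s \<in> {a..\<tau>} \<Longrightarrow> norm (w s) \<le> \<rho>"
    and X: "trajectory w a \<tau> X" and Y: "trajectory (pert w v \<tau> \<epsilon>) a \<tau> Y" and Y0: "Y a = X a"
    and s: "s \<in> {a..\<tau> - \<epsilon>}"
  shows "Y s = X s"
proof -
  have "norm (Y s - X s) \<le> (norm (Y a - X a) + K * 0 * (\<tau> - \<epsilon> - a)) * exp (K * (s - a))"
  proof (rule trajectory_deviation[OF integral_solution_subinterval[OF Y] integral_solution_subinterval[OF X] _ s])
    fix r assume "r \<in> {a..\<tau> - \<epsilon>}"
    then show "norm (pert w v \<tau> \<epsilon> r) \<le> \<rho> \<and> norm (w r) \<le> \<rho> \<and> norm (pert w v \<tau> \<epsilon> r - w r) \<le> 0"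
      using w \<epsilon> unfolding pert_def by auto
  qed (use \<epsilon> in auto)
  then show ?thesis using Y0 by simp
qed

lemma needle_deviation:
  assumes \<epsilon>: "\<epsilon> \<ge> 0" "a \<le> \<tau> - \<epsilon>"
    and w: "\<And>s. s \<in> {a..\<tau>} \<Longrightarrow> norm (w s) \<le> \<rho>" and v: "norm v \<le> \<rho>"
    and X: "trajectory w a \<tau> X" and Y: "trajectory (pert w v \<tau> \<epsilon>) a \<tau> Y" and Y0: "Y a = X a"
    and s: "s \<in> {\<tau> - \<epsilon>..\<tau>}"
  shows "norm (Y s - X s) \<le> 2 * \<rho> * K * \<epsilon> * exp (K * \<epsilon>)"
proof -
  have "norm (Y s - X s)
      \<le> (norm (Y (\<tau> - \<epsilon>) - X (\<tau> - \<epsilon>)) + K * (2 * \<rho>) * (\<tau> - (\<tau> - \<epsilon>))) * exp (K * (s - (\<tau> - \<epsilon>)))"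
  proof (rule trajectory_deviation[OF integral_solution_subinterval[OF Y] integral_solution_subinterval[OF X] _ s])
    fix r assume r: "r \<in> {\<tau> - \<epsilon>..\<tau>}"
    then have "norm (pert w v \<tau> \<epsilon> r) \<le> \<rho>" "norm (w r) \<le> \<rho>"
      using w v \<epsilon> unfolding pert_def by auto
    then show "norm (pert w v \<tau> \<epsilon> r) \<le> \<rho> \<and> norm (w r) \<le> \<rho> \<and> norm (pert w v \<tau> \<epsilon> r - w r) \<le> 2 * \<rho>"
      using norm_triangle_ineq4[of "pert w v \<tau> \<epsilon> r" "w r"] by simp
  qed (use \<epsilon> in auto)
  also have "Y (\<tau> - \<epsilon>) = X (\<tau> - \<epsilon>)"
    using \<epsilon> by (intro needle_agrees_before[OF _ w X Y Y0]) auto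
  also have "(norm (X (\<tau> - \<epsilon>) - X (\<tau> - \<epsilon>)) + K * (2 * \<rho>) * (\<tau> - (\<tau> - \<epsilon>)))
      = 2 * \<rho> * K * \<epsilon>" by simp
  also have "2 * \<rho> * K * \<epsilon> * exp (K * (s - (\<tau> - \<epsilon>))) \<le> 2 * \<rho> * K * \<epsilon> * exp (K * \<epsilon>)"
  proof (rule mult_left_mono)
    show "exp (K * (s - (\<tau> - \<epsilon>))) \<le> exp (K * \<epsilon>)" using s K_nonneg by (simp add: mult_left_mono)
    show "0 \<le> 2 * \<rho> * K * \<epsilon>" using order_trans[OF norm_ge_zero v] \<epsilon> K_nonneg by simp
  qed
  finally show ?thesis .
qed

lemma needle_increment_integral:
  assumes \<epsilon>: "\<epsilon> \<ge> 0" "a \<le> \<tau> - \<epsilon>" and w: "\<And>s. s \<in> {a..\<tau>} \<Longrightarrow> norm (w s) \<le> \<rho>"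
    and X: "trajectory w a \<tau> X" and Y: "trajectory (pert w v \<tau> \<epsilon>) a \<tau> Y" and Y0: "Y a = X a"
  shows "((\<lambda>s. f (Y s, pert w v \<tau> \<epsilon> s) - f (X s, w s)) has_integral (Y \<tau> - X \<tau>)) {\<tau> - \<epsilon>..\<tau>}"
proof -
  have "((\<lambda>s. f (Y s, pert w v \<tau> \<epsilon> s) - f (X s, w s)) has_integral
      (Y \<tau> - X \<tau> - (Y (\<tau> - \<epsilon>) - X (\<tau> - \<epsilon>)))) {\<tau> - \<epsilon>..\<tau>}"
    using integral_solution_diff[OF integral_solution_subinterval[OF Y, of "\<tau> - \<epsilon>" \<tau>]
        integral_solution_subinterval[OF X, of "\<tau> - \<epsilon>" \<tau>]] \<epsilon>
    unfolding integral_solution_def by auto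
  moreover have "Y (\<tau> - \<epsilon>) = X (\<tau> - \<epsilon>)"
    using \<epsilon> by (intro needle_agrees_before[OF _ w X Y Y0]) auto
  ultimately show ?thesis by simp
qed

lemma lipschitz_increment_bound:
  assumes v: "norm v \<le> \<rho>" and w: "norm w1 \<le> \<rho>" "norm w0 \<le> \<rho>"
  shows "norm (f (y, v) - f (x, w1) - (f (x0, v) - f (x0, w0)))
    \<le> K * norm (y - x) + 2 * K * (norm (x - x0) + norm (w1 - w0))"
proof -
  have "f (y, v) - f (x, w1) - (f (x0, v) - f (x0, w0)) = (f (y, v) - f (x0, v)) - (f (x, w1) - f (x0, w0))"
    by (simp add: algebra_simps)
  then have "norm (f (y, v) - f (x, w1) - (f (x0, v) - f (x0, w0)))
      \<le> norm (f (y, v) - f (x0, v)) + norm (f (x, w1) - f (x0, w0))"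
    by (metis norm_triangle_ineq4)
  also have "\<dots> \<le> K * (norm (y - x) + norm (x - x0)) + K * (norm (x - x0) + norm (w1 - w0))"
  proof (rule add_mono)
    have "norm (f (y, v) - f (x0, v)) \<le> K * norm (y - x0)"
      using lipschitz[OF v v, of y x0] by simp
    also have "\<dots> \<le> K * (norm (y - x) + norm (x - x0))"
      using dist_triangle[of y x0 x, unfolded dist_norm] K_nonneg by (rule mult_left_mono)
    finally show "norm (f (y, v) - f (x0, v)) \<le> K * (norm (y - x) + norm (x - x0))" .
  qed (rule lipschitz[OF w])
  also have "\<dots> \<le> K * norm (y - x) + 2 * K * (norm (x - x0) + norm (w1 - w0))"
    using mult_nonneg_nonneg[OF K_nonneg norm_ge_zero[of "w1 - w0"]] by (simp add: algebra_simps)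
  finally show ?thesis .
qed

lemma needle_quotient_error:
  assumes \<epsilon>: "\<epsilon> > 0" "a \<le> \<tau> - \<epsilon>"
    and w: "\<And>s. s \<in> {a..\<tau>} \<Longrightarrow> norm (w s) \<le> \<rho>" and v: "norm v \<le> \<rho>"
    and X: "trajectory w a \<tau> X" and Y: "trajectory (pert w v \<tau> \<epsilon>) a \<tau> Y" and Y0: "Y a = X a"
    and \<sigma>: "\<And>s. s \<in> {\<tau> - \<epsilon>..\<tau>} \<Longrightarrow> norm (X s - X \<tau>) + norm (w s - w \<tau>) \<le> \<sigma>"
  shows "norm ((Y \<tau> - X \<tau>) /\<^sub>R \<epsilon> - (f (X \<tau>, v) - f (X \<tau>, w \<tau>)))
    \<le> K * (2 * \<rho> * K * \<epsilon> * exp (K * \<epsilon>)) + 2 * K * \<sigma>"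
proof -
  define F0 where "F0 = f (X \<tau>, v) - f (X \<tau>, w \<tau>)"
  define M where "M = K * (2 * \<rho> * K * \<epsilon> * exp (K * \<epsilon>)) + 2 * K * \<sigma>"
  have "((\<lambda>s. f (Y s, pert w v \<tau> \<epsilon> s) - f (X s, w s) - F0) has_integral
      (Y \<tau> - X \<tau> - \<epsilon> *\<^sub>R F0)) {\<tau> - \<epsilon>..\<tau>}"
    using has_integral_diff[OF needle_increment_integral[OF less_imp_le[OF \<epsilon>(1)] \<epsilon>(2) w X Y Y0]
        has_integral_const_real[of F0 "\<tau> - \<epsilon>" \<tau>]] \<epsilon>
    by simp
  moreover have "0 \<le> M"
    unfolding M_def using \<sigma>[of \<tau>] \<epsilon> K_nonneg order_trans[OF norm_ge_zero v]
    by (intro add_nonneg_nonneg mult_nonneg_nonneg) auto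
  moreover have "norm (f (Y s, pert w v \<tau> \<epsilon> s) - f (X s, w s) - F0) \<le> M"
    if s: "s \<in> {\<tau> - \<epsilon>..\<tau>} - {\<tau> - \<epsilon>}" for s
  proof -
    from s have s': "s \<in> {\<tau> - \<epsilon>..\<tau>}" and pert: "pert w v \<tau> \<epsilon> s = v" unfolding pert_def by auto
    have "norm (f (Y s, v) - f (X s, w s) - F0)
        \<le> K * norm (Y s - X s) + 2 * K * (norm (X s - X \<tau>) + norm (w s - w \<tau>))"
      unfolding F0_def using w s' \<epsilon> by (intro lipschitz_increment_bound[OF v]) auto
    also have "\<dots> \<le> M"
      unfolding M_def using needle_deviation[OF less_imp_le[OF \<epsilon>(1)] \<epsilon>(2) w v X Y Y0 s'] \<sigma>[OF s'] K_nonneg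
      by (intro add_mono mult_left_mono) auto
    finally show ?thesis unfolding pert .
  qed
  ultimately have "norm (Y \<tau> - X \<tau> - \<epsilon> *\<^sub>R F0) \<le> M * Henstock_Kurzweil_Integration.content {\<tau> - \<epsilon>..\<tau>}"
    by (intro has_integral_bound_real[where S = "{\<tau> - \<epsilon>}"]) auto
  then have "norm ((Y \<tau> - X \<tau> - \<epsilon> *\<^sub>R F0) /\<^sub>R \<epsilon>) \<le> M"
    using \<epsilon> by (simp add: divide_le_eq inverse_eq_divide mult.commute)
  moreover have "(Y \<tau> - X \<tau>) /\<^sub>R \<epsilon> - F0 = (Y \<tau> - X \<tau> - \<epsilon> *\<^sub>R F0) /\<^sub>R \<epsilon>"
    using \<epsilon> by (simp add: algebra_simps)
  ultimately show ?thesis unfolding F0_def M_def by simp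
qed

lemma needle_limit:
  assumes a: "a < \<tau>"
    and w: "\<And>s. s \<in> {a..\<tau>} \<Longrightarrow> norm (w s) \<le> \<rho>" and v: "norm v \<le> \<rho>"
    and w_left: "(w \<longlongrightarrow> w \<tau>) (at_left \<tau>)"
    and X: "trajectory w a \<tau> X"
    and XE: "\<forall>\<^sub>F \<epsilon> in at_right 0. trajectory (pert w v \<tau> \<epsilon>) a \<tau> (XE \<epsilon>) \<and> XE \<epsilon> a = X a"
  shows "((\<lambda>\<epsilon>. (XE \<epsilon> \<tau> - X \<tau>) /\<^sub>R \<epsilon>) \<longlongrightarrow> f (X \<tau>, v) - f (X \<tau>, w \<tau>)) (at_right 0)"
proof (rule tendsto_by_eventual_bound[where C = "2 * K"])
  have "((\<lambda>\<epsilon>. K * (2 * \<rho> * K * \<epsilon> * exp (K * \<epsilon>))) \<longlongrightarrow> K * (2 * \<rho> * K * 0 * exp (K * 0))) (at_right 0)"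
    by (intro tendsto_intros)
  then show "((\<lambda>\<epsilon>. K * (2 * \<rho> * K * \<epsilon> * exp (K * \<epsilon>))) \<longlongrightarrow> 0) (at_right 0)" by simp
  fix \<eta> :: real assume \<eta>: "\<eta> > 0"
  have "(X \<longlongrightarrow> X \<tau>) (at \<tau> within {a..\<tau>})"
    using X a unfolding integral_solution_def continuous_on_def by auto
  then have "(X \<longlongrightarrow> X \<tau>) (at_left \<tau>)" by (simp add: at_within_Icc_at_left[OF a])
  then have "((\<lambda>s. norm (X s - X \<tau>) + norm (w s - w \<tau>)) \<longlongrightarrow> 0) (at_left \<tau>)"
    using tendsto_add[OF tendsto_norm_zero[OF LIM_zero] tendsto_norm_zero[OF LIM_zero[OF w_left]]] by simp
  from order_tendstoD(2)[OF this \<eta>] obtain b where b: "b < \<tau>"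
    and osc: "\<And>s. b < s \<Longrightarrow> s < \<tau> \<Longrightarrow> norm (X s - X \<tau>) + norm (w s - w \<tau>) < \<eta>"
    unfolding eventually_at_left_field by blast
  have "\<forall>\<^sub>F \<epsilon> in at_right 0. \<epsilon> < min (\<tau> - b) (\<tau> - a)"
    using a b by (intro order_tendstoD(2)[OF tendsto_ident_at]) simp
  with XE eventually_at_right_less[of "0::real"]
  show "\<forall>\<^sub>F \<epsilon> in at_right 0. norm ((XE \<epsilon> \<tau> - X \<tau>) /\<^sub>R \<epsilon> - (f (X \<tau>, v) - f (X \<tau>, w \<tau>)))
      \<le> K * (2 * \<rho> * K * \<epsilon> * exp (K * \<epsilon>)) + 2 * K * \<eta>"
  proof eventually_elim
    case (elim \<epsilon>)
    show ?case
    proof (rule needle_quotient_error[OF _ _ w v X])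
      fix s assume "s \<in> {\<tau> - \<epsilon>..\<tau>}"
      then show "norm (X s - X \<tau>) + norm (w s - w \<tau>) \<le> \<eta>"
        using osc[of s] elim \<eta> by (cases "s = \<tau>") auto
    qed (use elim in auto)
  qed
qed

end

section \<open>The variational equation\<close>

locale smooth_control_system = lipschitz_control_system f \<rho> K
  for f :: "'x::euclidean_space \<times> 'u::euclidean_space \<Rightarrow> 'x" and \<rho> K +
  fixes f' :: "'x \<times> 'u \<Rightarrow> ('x \<times> 'u) \<Rightarrow>\<^sub>L 'x"
  assumes f_deriv: "\<And>p. (f has_derivative blinfun_apply (f' p)) (at p)"
    and f'_cont: "continuous_on UNIV f'"
begin

lemma variational_limit:
  assumes w: "\<And>s. s \<in> {a..b} \<Longrightarrow> norm (w s) \<le> \<rho>"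
    and X: "trajectory w a b X" and XE: "\<forall>\<^sub>F \<epsilon> in at_right 0. trajectory w a b (XE \<epsilon>)"
    and P: "integral_solution (\<lambda>s p. partial_x (f' (X s, w s)) p) a b P"
    and init: "((\<lambda>\<epsilon>. (XE \<epsilon> a - X a) /\<^sub>R \<epsilon>) \<longlongrightarrow> P a) (at_right 0)"
    and t: "t \<in> {a..b}"
  shows "((\<lambda>\<epsilon>. (XE \<epsilon> t - X t) /\<^sub>R \<epsilon>) \<longlongrightarrow> P t) (at_right 0)"
proof -
  obtain B where B: "B > 0"
    and dev: "\<forall>\<^sub>F \<epsilon> in at_right 0. \<forall>s\<in>{a..b}. norm (XE \<epsilon> s - X s) \<le> B * \<epsilon>"
    using trajectory_deviation_linear[OF w X XE init] by blast
  obtain C where C: "compact C" and XwC: "\<And>s. s \<in> {a..b} \<Longrightarrow> (X s, w s) \<in> C"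
    using bounded_graph_in_compact[of a b X w] X w unfolding integral_solution_def by blast
  have "bounded (f' ` C)"
    using C by (intro compact_imp_bounded compact_continuous_image continuous_on_subset[OF f'_cont]) auto
  then obtain A where A: "A > 0" "\<And>p. p \<in> C \<Longrightarrow> norm (f' p) \<le> A"
    unfolding bounded_pos by blast
  define E where "E = exp (A * (b - a))"
  have "((\<lambda>\<epsilon>. norm ((XE \<epsilon> a - X a) /\<^sub>R \<epsilon> - P a) * E) \<longlongrightarrow> 0) (at_right 0)"
    by (rule tendsto_mult_left_zero[OF tendsto_norm_zero[OF LIM_zero[OF init]]])
  then show ?thesis
  proof (rule tendsto_by_eventual_bound[where C = "B * (b - a) * E"])
    fix \<eta> :: real assume \<eta>: "\<eta> > 0"
    obtain \<delta> where \<delta>: "\<delta> > 0" and lin: "\<And>x u h. (x, u) \<in> C \<Longrightarrow> norm h < \<delta> \<Longrightarrow>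
        norm (f (x + h, u) - f (x, u) - partial_x (f' (x, u)) h) \<le> \<eta> * norm h"
      using uniform_partial_linearization[OF f_deriv f'_cont C \<eta>] by blast
    have "\<forall>\<^sub>F \<epsilon> in at_right 0. B * \<epsilon> < \<delta>"
      using order_tendstoD(2)[OF tendsto_mult_right_zero[OF tendsto_ident_at] \<delta>] by simp
    with XE dev eventually_at_right_less[of "0::real"]
    show "\<forall>\<^sub>F \<epsilon> in at_right 0. norm ((XE \<epsilon> t - X t) /\<^sub>R \<epsilon> - P t)
        \<le> norm ((XE \<epsilon> a - X a) /\<^sub>R \<epsilon> - P a) * E + B * (b - a) * E * \<eta>"
    proof eventually_elim
      case (elim \<epsilon>)
      have remainder: "norm (f (XE \<epsilon> s, w s) - f (X s, w s) - partial_x (f' (X s, w s)) (XE \<epsilon> s - X s))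
          \<le> (\<eta> * B) * \<epsilon>" if s: "s \<in> {a..b}" for s
      proof -
        have "norm (XE \<epsilon> s - X s) \<le> B * \<epsilon>" using elim s by blast
        with lin[OF XwC[OF s], of "XE \<epsilon> s - X s"] elim
        have "norm (f (XE \<epsilon> s, w s) - f (X s, w s) - partial_x (f' (X s, w s)) (XE \<epsilon> s - X s))
            \<le> \<eta> * norm (XE \<epsilon> s - X s)" by simp
        also have "\<dots> \<le> \<eta> * (B * \<epsilon>)" using elim s \<eta> by (intro mult_left_mono) auto
        finally show ?thesis by (simp add: algebra_simps)
      qed
      have "norm ((XE \<epsilon> t - X t) /\<^sub>R \<epsilon> - P t)
          \<le> (norm ((XE \<epsilon> a - X a) /\<^sub>R \<epsilon> - P a) + \<eta> * B * (b - a)) * exp (A * (t - a))"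
        by (rule variational_error_bound[OF X _ P _ _ _ _ remainder t]) (use elim \<eta> B A XwC in auto)
      also have "\<dots> \<le> (norm ((XE \<epsilon> a - X a) /\<^sub>R \<epsilon> - P a) + \<eta> * B * (b - a)) * E"
        unfolding E_def using t A \<eta> B by (intro mult_left_mono) (auto intro: mult_left_mono)
      finally show ?case by (simp add: algebra_simps)
    qed
  qed
qed

lemma first_mode_variation:
  assumes \<tau>: "a < \<tau>" "\<tau> \<le> b"
    and w: "\<And>s. s \<in> {a..b} \<Longrightarrow> norm (w s) \<le> \<rho>" and v: "norm v \<le> \<rho>"
    and w_left: "(w \<longlongrightarrow> w \<tau>) (at_left \<tau>)"
    and X: "trajectory w a b X"
    and XE: "\<forall>\<^sub>F \<epsilon> in at_right 0. trajectory (pert w v \<tau> \<epsilon>) a b (XE \<epsilon>) \<and> XE \<epsilon> a = X a"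
    and P: "integral_solution (\<lambda>s p. partial_x (f' (X s, w s)) p) \<tau> b P"
    and P_init: "P \<tau> = f (X \<tau>, v) - f (X \<tau>, w \<tau>)"
    and t: "t \<in> {\<tau>..b}"
  shows "((\<lambda>\<epsilon>. (XE \<epsilon> t - X t) /\<^sub>R \<epsilon>) \<longlongrightarrow> P t) (at_right 0)"
proof -
  have needle: "((\<lambda>\<epsilon>. (XE \<epsilon> \<tau> - X \<tau>) /\<^sub>R \<epsilon>) \<longlongrightarrow> P \<tau>) (at_right 0)"
    unfolding P_init
  proof (rule needle_limit[OF \<tau>(1) _ v w_left integral_solution_subinterval[OF X]])
    show "\<forall>\<^sub>F \<epsilon> in at_right 0. trajectory (pert w v \<tau> \<epsilon>) a \<tau> (XE \<epsilon>) \<and> XE \<epsilon> a = X a"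
      using XE by (rule eventually_mono) (use \<tau> integral_solution_subinterval[of _ a b _ a \<tau>] in auto)
  qed (use w \<tau> in auto)
  have XE': "\<forall>\<^sub>F \<epsilon> in at_right 0. trajectory w \<tau> b (XE \<epsilon>)"
  proof (rule eventually_mono[OF XE])
    fix \<epsilon> assume "trajectory (pert w v \<tau> \<epsilon>) a b (XE \<epsilon>) \<and> XE \<epsilon> a = X a"
    then have "trajectory (pert w v \<tau> \<epsilon>) \<tau> b (XE \<epsilon>)"
      using \<tau> integral_solution_subinterval[of _ a b "XE \<epsilon>" \<tau> b] by auto
    then show "trajectory w \<tau> b (XE \<epsilon>)" by (rule trajectory_pert_after) simp
  qed
  show ?thesis
    by (rule variational_limit[OF _ integral_solution_subinterval[OF X] XE' P needle t]) (use w \<tau> in auto)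
qed

lemma variational_limit_after_reset:
  assumes g: "(g has_derivative G) (at X0)"
    and prev: "((\<lambda>\<epsilon>. (XE0 \<epsilon> - X0) /\<^sub>R \<epsilon>) \<longlongrightarrow> P0) (at_right 0)"
    and reset: "X a = g X0" "\<forall>\<^sub>F \<epsilon> in at_right 0. XE \<epsilon> a = g (XE0 \<epsilon>)" "P a = G P0"
    and w: "\<And>s. s \<in> {a..b} \<Longrightarrow> norm (w s) \<le> \<rho>"
    and X: "trajectory w a b X" and XE: "\<forall>\<^sub>F \<epsilon> in at_right 0. trajectory w a b (XE \<epsilon>)"
    and P: "integral_solution (\<lambda>s p. partial_x (f' (X s, w s)) p) a b P"
    and t: "t \<in> {a..b}"
  shows "((\<lambda>\<epsilon>. (XE \<epsilon> t - X t) /\<^sub>R \<epsilon>) \<longlongrightarrow> P t) (at_right 0)"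
proof (rule variational_limit[OF w X XE P _ t])
  have "((\<lambda>\<epsilon>. (g (XE0 \<epsilon>) - g X0) /\<^sub>R \<epsilon>) \<longlongrightarrow> G P0) (at_right 0)"
    by (rule tendsto_diff_quotient_compose[OF g prev])
  moreover have "\<forall>\<^sub>F \<epsilon> in at_right 0. (g (XE0 \<epsilon>) - g X0) /\<^sub>R \<epsilon> = (XE \<epsilon> a - X a) /\<^sub>R \<epsilon>"
    using reset(2) by (rule eventually_mono) (simp add: reset(1))
  ultimately show "((\<lambda>\<epsilon>. (XE \<epsilon> a - X a) /\<^sub>R \<epsilon>) \<longlongrightarrow> P a) (at_right 0)"
    unfolding reset(3) by (rule Lim_transform_eventually)
qed

end

section \<open>Hybrid trajectories\<close>

lemma is_hybrid_traj_mode: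
  assumes "is_hybrid_traj f g T x0 y w xs" and "i \<in> {1..T}"
  shows "integral_solution (\<lambda>s x. f (x, w s)) (real i - 1) (real i) (xs i)"
  using assms unfolding is_hybrid_traj_def integral_solution_def by blast

lemma hybrid_state_mode:
  assumes "i \<in> {1..T}" and "t \<in> {real i - 1..<real i}"
  shows "hybrid_state g T y Z t = Z i t"
proof -
  have "\<lfloor>t\<rfloor> = int i - 1" using assms by (simp add: floor_eq_iff)
  then have "nat \<lfloor>t\<rfloor> + 1 = i" using assms by auto
  moreover have "t \<noteq> real T" using assms by auto
  ultimately show ?thesis unfolding hybrid_state_def by simp
qed

lemma (in smooth_control_system) hybrid_mode_variation:
  fixes g :: "'x \<Rightarrow> 'y \<Rightarrow> 'x"
  assumes g_deriv: "\<And>x y. ((\<lambda>z. g z y) has_derivative blinfun_apply (gx x y)) (at x)"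
    and \<tau>: "0 < \<tau>" "\<tau> < 1"
    and u_bound: "\<And>s. s \<in> {0..real T} \<Longrightarrow> norm (u s) \<le> \<rho>" and v: "norm v \<le> \<rho>"
    and u_left: "(u \<longlongrightarrow> u \<tau>) (at_left \<tau>)"
    and xs: "is_hybrid_traj f g T x0 y u xs"
    and xe: "\<forall>\<^sub>F \<epsilon> in at_right 0. is_hybrid_traj f g T x0 y (pert u v \<tau> \<epsilon>) (xe \<epsilon>)"
    and Psi1: "integral_solution (\<lambda>s p. partial_x (f' (xs 1 s, u s)) p) \<tau> 1 (Psi 1)"
      "Psi 1 \<tau> = f (xs 1 \<tau>, v) - f (xs 1 \<tau>, u \<tau>)"
    and Psi: "\<And>i. i \<in> {2..T} \<Longrightarrow>
        integral_solution (\<lambda>s p. partial_x (f' (xs i s, u s)) p) (real i - 1) (real i) (Psi i)"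
      "\<And>i. i \<in> {2..T} \<Longrightarrow>
        Psi i (real i - 1) = gx (xs (i - 1) (real i - 1)) (y (i - 1)) (Psi (i - 1) (real i - 1))"
    and i: "i \<in> {1..T}" and t: "t \<in> {max \<tau> (real i - 1)..real i}"
  shows "((\<lambda>\<epsilon>. (xe \<epsilon> i t - xs i t) /\<^sub>R \<epsilon>) \<longlongrightarrow> Psi i t) (at_right 0)"
  using i t
proof (induction i arbitrary: t)
  case 0
  then show ?case by simp
next
  case (Suc n)
  show ?case
  proof (cases "n = 0")
    case True
    have X: "trajectory u 0 1 (xs 1)" using is_hybrid_traj_mode[OF xs, of 1] Suc.prems by simp
    have XE: "\<forall>\<^sub>F \<epsilon> in at_right 0. trajectory (pert u v \<tau> \<epsilon>) 0 1 (xe \<epsilon> 1) \<and> xe \<epsilon> 1 0 = xs 1 0"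
      using xe by (rule eventually_mono)
        (use xs Suc.prems is_hybrid_traj_mode[of f g T x0 y _ _ 1] in \<open>auto simp: is_hybrid_traj_def\<close>)
    have "((\<lambda>\<epsilon>. (xe \<epsilon> 1 t - xs 1 t) /\<^sub>R \<epsilon>) \<longlongrightarrow> Psi 1 t) (at_right 0)"
      by (rule first_mode_variation[OF _ _ _ v u_left X XE Psi1]) (use \<tau> u_bound Suc.prems True in auto)
    then show ?thesis using True by simp
  next
    case False
    define i where "i = Suc n"
    have i: "i \<in> {2..T}" and n: "n = i - 1" "n \<in> {1..T}" and ri: "real i - 1 = real n"
      using Suc.prems False unfolding i_def by auto
    have prev: "((\<lambda>\<epsilon>. (xe \<epsilon> (i - 1) (real i - 1) - xs (i - 1) (real i - 1)) /\<^sub>R \<epsilon>)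
        \<longlongrightarrow> Psi (i - 1) (real i - 1)) (at_right 0)"
      unfolding ri n(1)[symmetric] using Suc.IH[OF n(2), of "real n"] \<tau> n(2) by simp
    have XE: "\<forall>\<^sub>F \<epsilon> in at_right 0. trajectory u (real i - 1) (real i) (xe \<epsilon> i)"
    proof (rule eventually_mono[OF xe])
      fix \<epsilon> assume "is_hybrid_traj f g T x0 y (pert u v \<tau> \<epsilon>) (xe \<epsilon>)"
      from is_hybrid_traj_mode[OF this] show "trajectory u (real i - 1) (real i) (xe \<epsilon> i)"
        by (rule trajectory_pert_after) (use i \<tau> in auto)
    qed
    have "((\<lambda>\<epsilon>. (xe \<epsilon> i t - xs i t) /\<^sub>R \<epsilon>) \<longlongrightarrow> Psi i t) (at_right 0)"
    proof (rule variational_limit_after_reset[OF g_deriv prev _ _ Psi(2)[OF i] _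
          is_hybrid_traj_mode[OF xs] XE Psi(1)[OF i]])
      show "xs i (real i - 1) = g (xs (i - 1) (real i - 1)) (y (i - 1))"
        using xs i by (simp add: is_hybrid_traj_def)
      show "\<forall>\<^sub>F \<epsilon> in at_right 0. xe \<epsilon> i (real i - 1) = g (xe \<epsilon> (i - 1) (real i - 1)) (y (i - 1))"
        using xe by (rule eventually_mono) (use i in \<open>simp add: is_hybrid_traj_def\<close>)
    qed (use u_bound i Suc.prems \<tau> in \<open>auto simp: i_def\<close>)
    then show ?thesis unfolding i_def .
  qed
qed

theorem proposition8:
  fixes f :: "'x::euclidean_space \<times> 'u::euclidean_space \<Rightarrow> 'x"
    and f' :: "'x \<times> 'u \<Rightarrow> (('x \<times> 'u) \<Rightarrow>\<^sub>L 'x)"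
    and g :: "'x \<Rightarrow> 'y::euclidean_space \<Rightarrow> 'x"
    and gx :: "'x \<Rightarrow> 'y \<Rightarrow> ('x \<Rightarrow>\<^sub>L 'x)"
    and T L1 L2 :: nat
    and \<rho> K1 K2 K3 K4 K5 \<tau> :: real
    and x0 :: 'x and y :: "nat \<Rightarrow> 'y" and v :: 'u and u :: "real \<Rightarrow> 'u"
    and xs :: "nat \<Rightarrow> real \<Rightarrow> 'x"
    and xe :: "real \<Rightarrow> nat \<Rightarrow> real \<Rightarrow> 'x"
    and Psi :: "nat \<Rightarrow> real \<Rightarrow> 'x"
  assumes T_pos: "T \<ge> 1"
    and rho_pos: "\<rho> > 0"
    and f_deriv: "\<And>p. (f has_derivative blinfun_apply (f' p)) (at p)"
    and f'_cont: "continuous_on UNIV f'"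
    and K1: "K1 \<ge> 1"
    and f_lip: "\<And>x1 x2 u1 u2. norm u1 \<le> \<rho> \<Longrightarrow> norm u2 \<le> \<rho> \<Longrightarrow>
                  norm (f (x1, u1) - f (x2, u2)) \<le> K1 * (norm (x1 - x2) + norm (u1 - u2))"
    and g_cont: "continuous_on UNIV (\<lambda>(x, y). g x y)"
    and g_deriv: "\<And>x y. ((\<lambda>z. g z y) has_derivative blinfun_apply (gx x y)) (at x)"
    and K_nonneg: "K2 \<ge> 0" "K3 \<ge> 0" "K4 \<ge> 0" "K5 \<ge> 0"
    and L_pos: "L1 \<ge> 1" "L2 \<ge> 1"
    and g_bound: "\<And>x y. norm (g x y) \<le> K2 + K3 * norm x ^ L1 + K4 * norm y ^ L2
                                   + K5 * norm x ^ L1 * norm y ^ L2"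
    and gx_bound: "\<And>x y. norm (gx x y) \<le> K2 + K3 * norm x ^ L1 + K4 * norm y ^ L2
                                   + K5 * norm x ^ L1 * norm y ^ L2"
    and tau: "0 < \<tau>" "\<tau> < 1"
    and v: "norm v \<le> \<rho>"
    and u_adm: "admissible T \<rho> u"
    and u_left_cont: "(u \<longlongrightarrow> u \<tau>) (at_left \<tau>)"
    and xs_traj: "is_hybrid_traj f g T x0 y u xs"
    and xe_traj: "\<And>\<epsilon>. \<epsilon> \<in> {0..\<tau>} \<Longrightarrow> is_hybrid_traj f g T x0 y (pert u v \<tau> \<epsilon>) (xe \<epsilon>)"
    and Psi1: "continuous_on {\<tau>..1} (Psi 1)"
      "Psi 1 \<tau> = f (xs 1 \<tau>, v) - f (xs 1 \<tau>, u \<tau>)"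
      "\<And>t. t \<in> {\<tau>..1} \<Longrightarrow>
         ((\<lambda>s. partial_x (f' (xs 1 s, u s)) (Psi 1 s)) has_integral (Psi 1 t - Psi 1 \<tau>)) {\<tau>..t}"
    and Psii: "\<And>i. i \<in> {2..T} \<Longrightarrow> continuous_on {real i - 1..real i} (Psi i)"
      "\<And>i. i \<in> {2..T} \<Longrightarrow>
         Psi i (real i - 1) = gx (xs (i - 1) (real i - 1)) (y (i - 1)) (Psi (i - 1) (real i - 1))"
      "\<And>i t. i \<in> {2..T} \<Longrightarrow> t \<in> {real i - 1..real i} \<Longrightarrow>
         ((\<lambda>s. partial_x (f' (xs i s, u s)) (Psi i s)) has_integral (Psi i t - Psi i (real i - 1)))
           {real i - 1..t}"
  shows "(\<forall>t\<in>{\<tau>..<1}.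
            ((\<lambda>\<epsilon>. (hybrid_state g T y (xe \<epsilon>) t - hybrid_state g T y xs t) /\<^sub>R \<epsilon>)
               \<longlongrightarrow> Psi 1 t) (at_right 0)) \<and>
         (\<forall>i\<in>{2..T}. \<forall>t\<in>{real i - 1..<real i}.
            ((\<lambda>\<epsilon>. (hybrid_state g T y (xe \<epsilon>) t - hybrid_state g T y xs t) /\<^sub>R \<epsilon>)
               \<longlongrightarrow> Psi i t) (at_right 0)) \<and>
         ((\<lambda>\<epsilon>. (hybrid_state g T y (xe \<epsilon>) (real T) - hybrid_state g T y xs (real T)) /\<^sub>R \<epsilon>)
               \<longlongrightarrow> gx (xs T (real T)) (y T) (Psi T (real T))) (at_right 0)"
proof -
  interpret smooth_control_system f \<rho> K1 f'
    using K1 f_lip f_deriv f'_cont by unfold_locales auto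
  have u_bound: "\<And>s. s \<in> {0..real T} \<Longrightarrow> norm (u s) \<le> \<rho>"
    using u_adm unfolding admissible_def by blast
  have xe: "\<forall>\<^sub>F \<epsilon> in at_right 0. is_hybrid_traj f g T x0 y (pert u v \<tau> \<epsilon>) (xe \<epsilon>)"
    unfolding eventually_at_right_field using tau xe_traj by (intro exI[of _ \<tau>]) auto
  have mode: "((\<lambda>\<epsilon>. (xe \<epsilon> i t - xs i t) /\<^sub>R \<epsilon>) \<longlongrightarrow> Psi i t) (at_right 0)"
    if "i \<in> {1..T}" "t \<in> {max \<tau> (real i - 1)..real i}" for i t
    using hybrid_mode_variation[OF g_deriv tau u_bound v u_left_cont xs_traj xe _ Psi1(2) _ Psii(2) that]
      Psi1 Psii unfolding integral_solution_def by blast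
  have state: "((\<lambda>\<epsilon>. (hybrid_state g T y (xe \<epsilon>) t - hybrid_state g T y xs t) /\<^sub>R \<epsilon>) \<longlongrightarrow> Psi i t)
      (at_right 0)" if i: "i \<in> {1..T}" and t: "t \<in> {real i - 1..<real i}" "\<tau> \<le> t" for i t
    unfolding hybrid_state_mode[OF i t(1)] using mode[OF i] t by simp
  have "((\<lambda>\<epsilon>. (xe \<epsilon> T (real T) - xs T (real T)) /\<^sub>R \<epsilon>) \<longlongrightarrow> Psi T (real T)) (at_right 0)"
    using mode[of T "real T"] T_pos tau by simp
  from tendsto_diff_quotient_compose[OF g_deriv this]
  have "((\<lambda>\<epsilon>. (hybrid_state g T y (xe \<epsilon>) (real T) - hybrid_state g T y xs (real T)) /\<^sub>R \<epsilon>)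
      \<longlongrightarrow> gx (xs T (real T)) (y T) (Psi T (real T))) (at_right 0)"
    unfolding hybrid_state_def by simp
  then show ?thesis using state[of 1] state T_pos tau by auto
qed

end
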